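(* Let $\Gamma$ be a weighted digraph with vertex set $\{1,\dots,n\}$, $n>1$, without loops and with strictly positive arc weights, with Laplacian matrix $L$, in-forest dimension $d$, and let $\tilde J=J_{n-d}=\sigma_{n-d}^{-1}Q_{n-d}$. Then: (i) $L\tilde J=\tilde JL=LQ_{n-d}=Q_{n-d}L=0$; (ii) $\tilde JJ_k=J_k\tilde J=\tilde J$ for $k=0,\dots,n-d$; (iii) $\tilde J^2=\tilde J$; (iv) $\operatorname{rank}\tilde J=\mu_1(\tilde J)=\operatorname{tr}\tilde J=d$ and $\mu_0(\tilde J)=n-d$.
   Context: $W=(w_{ij})$ is the matrix of arc weights ($w_{ij}>0$ iff there is an arc $i\to j$, else $0$). The Laplacian $L=(\ell_{ij})$: $\ell_{ij}=-w_{ij}$ for $j\ne i$, $\ell_{ii}=\sum_{k\ne i}w_{ik}$. The weight of a subgraph is the product of its arc weights (1 if no arcs); the weight of a set of subgraphs is the sum of their weights. A converging tree is a weakly connected digraph with one vertex (the root) of outdegree 0 and all others of outdegree 1; an in-forest is a spanning subgraph of $\Gamma$ whose weak components are converging trees. The in-forest dimension $d$ is the minimal number of trees in an in-forest (so in-forests have at most $n-d$ arcs). $\sigma_k$ is the total weight of in-forests with $k$ arcs; $Q_k=(q^k_{ij})$ with $q^k_{ij}$ the total weight of in-forests with $k$ arcs in which $i$ lies in a tree rooted at $j$; $J_k=\sigma_k^{-1}Q_k$ for $k=0,\dots,n-d$. $\mu_\lambda(A)$ denotes the multiplicity of $\lambda$ as an eigenvalue of the square matrix $A$. *)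

theory Defs
  imports "Jordan_Normal_Form.DL_Rank" "Jordan_Normal_Form.Char_Poly"
begin

text \<open>Weighted digraphs on the vertex set {0..<n} given by an n x n weight matrix W
  (arc i->j iff W(i,j) > 0).\<close>

definition arcs :: "nat \<Rightarrow> real mat \<Rightarrow> (nat \<times> nat) set" where
  "arcs n W = {(i,j). i < n \<and> j < n \<and> W $$ (i,j) > 0}"

definition outdeg :: "(nat \<times> nat) set \<Rightarrow> nat \<Rightarrow> nat" where
  "outdeg A v = card {w. (v,w) \<in> A}"

definition weakly_connected :: "nat set \<Rightarrow> (nat \<times> nat) set \<Rightarrow> bool" where
  "weakly_connected V A \<longleftrightarrow> (\<forall>x\<in>V. \<forall>y\<in>V. (x,y) \<in> (A \<union> A\<inverse>)\<^sup>*)"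

definition converging_tree :: "nat set \<Rightarrow> (nat \<times> nat) set \<Rightarrow> bool" where
  "converging_tree V A \<longleftrightarrow> finite V \<and> A \<subseteq> V \<times> V \<and> weakly_connected V A \<and>
     (\<exists>r\<in>V. outdeg A r = 0 \<and> (\<forall>v\<in>V - {r}. outdeg A v = 1))"

definition weak_comp :: "nat set \<Rightarrow> (nat \<times> nat) set \<Rightarrow> nat \<Rightarrow> nat set" where
  "weak_comp V F v = {u\<in>V. (v,u) \<in> (F \<union> F\<inverse>)\<^sup>*}"

definition weak_comps :: "nat set \<Rightarrow> (nat \<times> nat) set \<Rightarrow> nat set set" where
  "weak_comps V F = weak_comp V F ` V"

definition in_forest :: "nat \<Rightarrow> real mat \<Rightarrow> (nat \<times> nat) set \<Rightarrow> bool" where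
  "in_forest n W F \<longleftrightarrow> F \<subseteq> arcs n W \<and>
     (\<forall>C\<in>weak_comps {..<n} F. converging_tree C (F \<inter> (C \<times> C)))"

definition forest_dim :: "nat \<Rightarrow> real mat \<Rightarrow> nat" where
  "forest_dim n W = Min {card (weak_comps {..<n} F) | F. in_forest n W F}"

definition weight :: "real mat \<Rightarrow> (nat \<times> nat) set \<Rightarrow> real" where
  "weight W F = (\<Prod>(i,j)\<in>F. W $$ (i,j))"

definition sigma :: "nat \<Rightarrow> real mat \<Rightarrow> nat \<Rightarrow> real" where
  "sigma n W k = (\<Sum>F\<in>{F. in_forest n W F \<and> card F = k}. weight W F)"

definition rooted_at :: "nat \<Rightarrow> (nat \<times> nat) set \<Rightarrow> nat \<Rightarrow> nat \<Rightarrow> bool" where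
  "rooted_at n F i j \<longleftrightarrow> j \<in> weak_comp {..<n} F i \<and> outdeg (F \<inter> (weak_comp {..<n} F i \<times> weak_comp {..<n} F i)) j = 0"

definition Qmat :: "nat \<Rightarrow> real mat \<Rightarrow> nat \<Rightarrow> real mat" where
  "Qmat n W k = mat n n (\<lambda>(i,j).
     (\<Sum>F\<in>{F. in_forest n W F \<and> card F = k \<and> rooted_at n F i j}. weight W F))"

definition Jmat :: "nat \<Rightarrow> real mat \<Rightarrow> nat \<Rightarrow> real mat" where
  "Jmat n W k = (1 / sigma n W k) \<cdot>\<^sub>m Qmat n W k"

definition laplacian :: "nat \<Rightarrow> real mat \<Rightarrow> real mat" where
  "laplacian n W = mat n n (\<lambda>(i,j). if i = j then (\<Sum>k\<in>{..<n} - {i}. W $$ (i,k)) else - W $$ (i,j))"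

definition eig_mult :: "real \<Rightarrow> real mat \<Rightarrow> nat" where
  "eig_mult lam A = order lam (char_poly A)"

definition mat_trace :: "real mat \<Rightarrow> real" where
  "mat_trace A = (\<Sum>i<dim_row A. A $$ (i,i))"

end

theory Submission
  imports Defs "Jordan_Normal_Form.Jordan_Normal_Form_Existence"
    "Jordan_Normal_Form.Jordan_Normal_Form_Uniqueness"
begin

text \<open>
  An in-forest is the same as a functional arc relation in which every vertex reaches a sink,
  the root of the tree of x being the sink reached from x. Comparing the entries of Q_(k+1) and
  L Q_k forest by forest, attaching an arc at i when i is a root and exchanging the out-arc of i
  otherwise, gives the matrix-forest recurrence Q_(k+1) + L Q_k = sigma_(k+1) I with Q_0 = I.
  As no in-forest has more than m = n - d arcs, the recurrence at k = m yields L Q_m = 0; since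
  every Q_k commutes with L, induction then gives Q_m Q_k = Q_k Q_m = sigma_k Q_m, so J_m is
  idempotent. Every in-forest with m arcs has exactly d roots, hence tr J_m = d, and for an
  idempotent matrix the trace determines both the characteristic polynomial (x - 1)^d x^(n - d)
  and the rank.
\<close>

section \<open>In-forests as functional arc relations\<close>

definition func_forest :: "nat \<Rightarrow> (nat \<times> nat) set \<Rightarrow> bool" where
  "func_forest n F \<longleftrightarrow> F \<subseteq> {..<n} \<times> {..<n} \<and> single_valued F \<and>
     (\<forall>x<n. \<exists>r. (x,r) \<in> F\<^sup>* \<and> r \<notin> Domain F)"

definition root_of :: "(nat \<times> nat) set \<Rightarrow> nat \<Rightarrow> nat" where
  "root_of F x = (THE r. (x,r) \<in> F\<^sup>* \<and> r \<notin> Domain F)"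

definition roots :: "nat \<Rightarrow> (nat \<times> nat) set \<Rightarrow> nat set" where
  "roots n F = {x. x < n \<and> x \<notin> Domain F}"

lemma func_forestD:
  assumes "func_forest n F"
  shows "F \<subseteq> {..<n} \<times> {..<n}" "single_valued F" "finite F"
  using assms finite_subset[of F "{..<n} \<times> {..<n}"] unfolding func_forest_def by auto

lemma func_forest_empty: "func_forest n {}"
  unfolding func_forest_def single_valued_def by auto

lemma sink_reachable_unique:
  assumes "single_valued F" "(x,r1) \<in> F\<^sup>*" "r1 \<notin> Domain F" "(x,r2) \<in> F\<^sup>*" "r2 \<notin> Domain F"
  shows "r1 = r2"
proof -
  have "a = b" if "(a,b) \<in> F\<^sup>*" "a \<notin> Domain F" for a b
    using that by (auto elim: converse_rtranclE)
  with single_valued_confluent[OF assms(1,2,4)] assms(3,5) show ?thesis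
    by metis
qed

lemma root_of_eqI:
  assumes "single_valued F" "(x,r) \<in> F\<^sup>*" "r \<notin> Domain F"
  shows "root_of F x = r"
  unfolding root_of_def using assms sink_reachable_unique[OF assms(1)]
    by (intro the_equality) blast+

lemma root_of_sink: "single_valued F \<Longrightarrow> x \<notin> Domain F \<Longrightarrow> root_of F x = x"
  by (rule root_of_eqI) auto

lemma
  assumes "func_forest n F" "x < n"
  shows rtrancl_root_of: "(x, root_of F x) \<in> F\<^sup>*"
    and root_of_notin_Domain: "root_of F x \<notin> Domain F"
    and root_of_less: "root_of F x < n"
proof -
  obtain r where r: "(x,r) \<in> F\<^sup>*" "r \<notin> Domain F"
    using assms unfolding func_forest_def by blast
  with root_of_eqI func_forestD(2)[OF assms(1)] have "root_of F x = r" by blast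
  with r show "(x, root_of F x) \<in> F\<^sup>*" "root_of F x \<notin> Domain F" by simp_all
  from r(1) show "root_of F x < n"
    unfolding \<open>root_of F x = r\<close> using assms func_forestD(1)[OF assms(1)]
    by (cases rule: rtranclE) auto
qed

lemma root_of_step:
  assumes "func_forest n F" "(a,b) \<in> F"
  shows "root_of F a = root_of F b"
proof -
  have "b < n" using assms func_forestD(1) by blast
  then have "(a, root_of F b) \<in> F\<^sup>*"
    using assms(2) rtrancl_root_of[OF assms(1)] by (blast intro: converse_rtrancl_into_rtrancl)
  then show ?thesis
    using root_of_eqI func_forestD(2) root_of_notin_Domain \<open>b < n\<close> assms(1) by blast
qed

lemma root_of_weak_path:
  assumes "func_forest n F" "(a,b) \<in> (F \<union> F\<inverse>)\<^sup>*"
  shows "root_of F a = root_of F b"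
  using assms(2) by induction (auto dest: root_of_step[OF assms(1)])

lemma root_of_eq_iff_sink:
  assumes "func_forest n F" "x < n"
  shows "root_of F x = x \<longleftrightarrow> x \<notin> Domain F"
proof
  show "root_of F x = x \<Longrightarrow> x \<notin> Domain F" using root_of_notin_Domain[OF assms] by simp
qed (rule root_of_sink[OF func_forestD(2)[OF assms(1)]])

lemma weak_path_sym:
  assumes "(x,y) \<in> (F \<union> F\<inverse>)\<^sup>*"
  shows "(y,x) \<in> (F \<union> F\<inverse>)\<^sup>*"
  using symD[OF sym_rtrancl[OF sym_Un_converse] assms] .

lemma weak_comp_eq:
  assumes "(x,y) \<in> (F \<union> F\<inverse>)\<^sup>*"
  shows "weak_comp V F x = weak_comp V F y"
proof -
  have "(x,u) \<in> (F \<union> F\<inverse>)\<^sup>* \<longleftrightarrow> (y,u) \<in> (F \<union> F\<inverse>)\<^sup>*" for u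
    using rtrancl_trans[OF assms] rtrancl_trans[OF weak_path_sym[OF assms]] by blast
  then show ?thesis unfolding weak_comp_def by simp
qed

lemma out_arcs_weak_comp:
  assumes "F \<subseteq> V \<times> V" "u \<in> weak_comp V F x"
  shows "{w. (u,w) \<in> F \<inter> (weak_comp V F x \<times> weak_comp V F x)} = {w. (u,w) \<in> F}"
proof -
  have "w \<in> weak_comp V F x" if "(u,w) \<in> F" for w
  proof -
    have "(x,w) \<in> (F \<union> F\<inverse>)\<^sup>*"
      using assms(2) that unfolding weak_comp_def by (blast intro: rtrancl_into_rtrancl)
    with that assms(1) show ?thesis unfolding weak_comp_def by blast
  qed
  with assms(2) show ?thesis by blast
qed

lemma weak_path_in_weak_comp:
  assumes "F \<subseteq> V \<times> V" "(x,y) \<in> (F \<union> F\<inverse>)\<^sup>*"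
  defines "C \<equiv> weak_comp V F x"
  shows "(x,y) \<in> ((F \<inter> (C \<times> C)) \<union> (F \<inter> (C \<times> C))\<inverse>)\<^sup>*"
  using assms(2)
proof induction
  case (step a b)
  have "a \<in> C" "b \<in> C"
    using step assms(1) unfolding C_def weak_comp_def by (auto intro: rtrancl_into_rtrancl)
  with step show ?case by (blast intro: rtrancl_into_rtrancl)
qed simp

lemma outdeg_func_forest:
  assumes "func_forest n F"
  shows "outdeg F u = of_bool (u \<in> Domain F)"
proof (cases "u \<in> Domain F")
  case True
  then obtain s where "(u,s) \<in> F" by blast
  then have "{w. (u,w) \<in> F} = {s}"
    using func_forestD(2)[OF assms] unfolding single_valued_def by blast
  with True show ?thesis unfolding outdeg_def by simp
next
  case False
  then have "{w. (u,w) \<in> F} = {}" by blast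
  with False show ?thesis unfolding outdeg_def by simp
qed

lemma converging_tree_reaches_root:
  assumes "converging_tree C A"
  obtains r where "r \<in> C" "r \<notin> Domain A" "single_valued A" "\<And>v. v \<in> C \<Longrightarrow> (v,r) \<in> A\<^sup>*"
proof -
  obtain r where r: "r \<in> C" "outdeg A r = 0" "\<And>v. v \<in> C - {r} \<Longrightarrow> outdeg A v = 1"
    and AC: "A \<subseteq> C \<times> C" and conn: "weakly_connected C A" and "finite C"
    using assms unfolding converging_tree_def by blast
  have fin: "finite {w. (v,w) \<in> A}" for v
    using \<open>finite C\<close> AC by (auto intro: finite_subset[of _ C])
  have r_sink: "r \<notin> Domain A"
    using r(2) fin[of r] unfolding outdeg_def by auto
  have sv: "single_valued A"
  proof (rule single_valuedI)
    fix v y z assume vy: "(v,y) \<in> A" and vz: "(v,z) \<in> A"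
    with AC r_sink have "v \<in> C - {r}" by blast
    then obtain q where "{w. (v,w) \<in> A} = {q}"
      using r(3) unfolding outdeg_def by (auto simp: card_Suc_eq)
    with vy vz show "y = z" by (metis mem_Collect_eq singletonD)
  qed
  have "(y,r) \<in> A\<^sup>*" if "y \<in> C" for y
  proof -
    have "(r,y) \<in> (A \<union> A\<inverse>)\<^sup>*" using conn r(1) that unfolding weakly_connected_def by blast
    then show ?thesis
    proof induction
      case (step a b)
      show ?case
      proof (cases "(a,b) \<in> A")
        case True
        with r_sink step.IH obtain c where "(a,c) \<in> A" "(c,r) \<in> A\<^sup>*"
          by (auto elim: converse_rtranclE)
        with True sv show ?thesis unfolding single_valued_def by blast
      next
        case False
        with step show ?thesis by (blast intro: converse_rtrancl_into_rtrancl)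
      qed
    qed simp
  qed
  with r(1) r_sink sv that show ?thesis by blast
qed

lemma in_forest_imp_func_forest:
  assumes "in_forest n W F"
  shows "func_forest n F"
proof -
  have sq: "F \<subseteq> {..<n} \<times> {..<n}"
    using assms unfolding in_forest_def arcs_def by blast
  have at_vertex: "(\<exists>r. (x,r) \<in> F\<^sup>* \<and> r \<notin> Domain F) \<and> (\<forall>y z. (x,y) \<in> F \<longrightarrow> (x,z) \<in> F \<longrightarrow> y = z)"
    if "x < n" for x
  proof -
    define C where "C = weak_comp {..<n} F x"
    have x: "x \<in> C" using that unfolding C_def weak_comp_def by simp
    have "converging_tree C (F \<inter> (C \<times> C))"
      using assms that unfolding in_forest_def weak_comps_def C_def by blast
    then obtain r where r: "r \<in> C" "r \<notin> Domain (F \<inter> (C \<times> C))"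
      and sv: "single_valued (F \<inter> (C \<times> C))" and reach: "(x,r) \<in> (F \<inter> (C \<times> C))\<^sup>*"
      using x by (elim converging_tree_reaches_root) blast
    have out: "{w. (u,w) \<in> F \<inter> (C \<times> C)} = {w. (u,w) \<in> F}" if "u \<in> C" for u
      using out_arcs_weak_comp[OF sq] that unfolding C_def by blast
    have "(x,r) \<in> F\<^sup>*" using reach rtrancl_mono[of "F \<inter> (C \<times> C)" F] by blast
    moreover have "r \<notin> Domain F" using r out[of r] by blast
    moreover have "y = z" if "(x,y) \<in> F" "(x,z) \<in> F" for y z
      using that out[OF x] sv unfolding single_valued_def by blast
    ultimately show ?thesis by blast
  qed
  have "single_valued F"
  proof (rule single_valuedI)
    fix x y z assume "(x,y) \<in> F" "(x,z) \<in> F"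
    with sq at_vertex show "y = z" by blast
  qed
  with at_vertex sq show ?thesis unfolding func_forest_def by blast
qed

lemma root_of_in_weak_comp:
  assumes F: "func_forest n F" and "x < n"
  shows "root_of F x \<in> weak_comp {..<n} F x"
  using rtrancl_root_of[OF assms] root_of_less[OF assms] rtrancl_mono[of F "F \<union> F\<inverse>"]
  unfolding weak_comp_def by blast

lemma weak_comp_converging_tree:
  assumes F: "func_forest n F" and "v < n"
  defines "C \<equiv> weak_comp {..<n} F v"
  shows "converging_tree C (F \<inter> (C \<times> C))"
proof -
  note sq = func_forestD(1)[OF F]
  have outdeg: "outdeg (F \<inter> (C \<times> C)) u = of_bool (u \<in> Domain F)" if "u \<in> C" for u
    using out_arcs_weak_comp[OF sq that[unfolded C_def]] outdeg_func_forest[OF F]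
    unfolding C_def outdeg_def by simp
  have conn: "(v,x) \<in> ((F \<inter> (C \<times> C)) \<union> (F \<inter> (C \<times> C))\<inverse>)\<^sup>*" if "x \<in> C" for x
  proof -
    have "(v,x) \<in> (F \<union> F\<inverse>)\<^sup>*" using that unfolding C_def weak_comp_def by simp
    from weak_path_in_weak_comp[OF sq this] show ?thesis unfolding C_def .
  qed
  have "weakly_connected C (F \<inter> (C \<times> C))"
    unfolding weakly_connected_def
    using rtrancl_trans[OF weak_path_sym[OF conn] conn] by blast
  moreover have "finite C" unfolding C_def weak_comp_def by simp
  moreover have "root_of F v \<in> C"
    unfolding C_def using root_of_in_weak_comp[OF F \<open>v < n\<close>] .
  moreover have "u \<in> Domain F" if u: "u \<in> C - {root_of F v}" for u
  proof -
    have "u < n" "(v,u) \<in> (F \<union> F\<inverse>)\<^sup>*" using u unfolding C_def weak_comp_def by auto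
    with u have "root_of F u \<noteq> u" using root_of_weak_path[OF F] by auto
    then show ?thesis using root_of_eq_iff_sink[OF F \<open>u < n\<close>] by blast
  qed
  ultimately show ?thesis
    unfolding converging_tree_def using outdeg root_of_notin_Domain[OF F \<open>v < n\<close>]
    by (intro conjI bexI[of _ "root_of F v"]) auto
qed

lemma in_forest_iff: "in_forest n W F \<longleftrightarrow> F \<subseteq> arcs n W \<and> func_forest n F"
  using in_forest_imp_func_forest weak_comp_converging_tree
  unfolding in_forest_def weak_comps_def by blast

lemma rooted_at_iff:
  assumes F: "func_forest n F" and "i < n"
  shows "rooted_at n F i j \<longleftrightarrow> j = root_of F i"
proof -
  have "rooted_at n F i j \<longleftrightarrow> j \<in> weak_comp {..<n} F i \<and> j \<notin> Domain F"
    using out_arcs_weak_comp[OF func_forestD(1)[OF F], of j] outdeg_func_forest[OF F, of j]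
    unfolding rooted_at_def outdeg_def by auto
  also have "\<dots> \<longleftrightarrow> j = root_of F i"
  proof
    assume j: "j \<in> weak_comp {..<n} F i \<and> j \<notin> Domain F"
    then have "root_of F i = root_of F j"
      using root_of_weak_path[OF F] unfolding weak_comp_def by blast
    with j show "j = root_of F i" using root_of_sink[OF func_forestD(2)[OF F]] by simp
  qed (use root_of_in_weak_comp[OF assms] root_of_notin_Domain[OF assms] in simp)
  finally show ?thesis .
qed

section \<open>Sizes of in-forests and the in-forest dimension\<close>

lemma card_func_forest_roots:
  assumes F: "func_forest n F"
  shows "card F + card (roots n F) = n"
proof -
  have "inj_on fst F"
    using func_forestD(2)[OF F] unfolding inj_on_def single_valued_def by auto
  then have "card F = card (Domain F)" by (simp add: card_image Domain_fst)
  moreover have "Domain F \<union> roots n F = {..<n}" "Domain F \<inter> roots n F = {}"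
    using func_forestD(1)[OF F] unfolding roots_def by auto
  moreover have "finite (Domain F)" using func_forestD(3)[OF F] by (rule finite_Domain)
  moreover have "finite (roots n F)" unfolding roots_def by simp
  ultimately show ?thesis using card_Un_disjoint[of "Domain F" "roots n F"] by simp
qed

lemma card_weak_comps:
  assumes F: "func_forest n F"
  shows "card (weak_comps {..<n} F) = card (roots n F)"
proof -
  have "weak_comp {..<n} F v \<in> weak_comp {..<n} F ` roots n F" if "v < n" for v
  proof -
    have "(v, root_of F v) \<in> (F \<union> F\<inverse>)\<^sup>*"
      using root_of_in_weak_comp[OF F that] unfolding weak_comp_def by simp
    moreover have "root_of F v \<in> roots n F"
      using root_of_less[OF F that] root_of_notin_Domain[OF F that] unfolding roots_def by simp
    ultimately show ?thesis using weak_comp_eq by blast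
  qed
  then have "weak_comp {..<n} F ` {..<n} \<subseteq> weak_comp {..<n} F ` roots n F" by blast
  moreover have "roots n F \<subseteq> {..<n}" unfolding roots_def by blast
  ultimately have "weak_comps {..<n} F = weak_comp {..<n} F ` roots n F"
    unfolding weak_comps_def by (simp add: image_mono subset_antisym)
  moreover have "inj_on (weak_comp {..<n} F) (roots n F)"
  proof (rule inj_onI)
    fix r1 r2 assume r: "r1 \<in> roots n F" "r2 \<in> roots n F"
      and eq: "weak_comp {..<n} F r1 = weak_comp {..<n} F r2"
    have "r2 \<in> weak_comp {..<n} F r1" using eq r(2) unfolding roots_def weak_comp_def by simp
    then have "root_of F r1 = root_of F r2"
      using root_of_weak_path[OF F] unfolding weak_comp_def by blast
    with r show "r1 = r2" using root_of_sink[OF func_forestD(2)[OF F]] unfolding roots_def by simp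
  qed
  ultimately show ?thesis by (simp add: card_image)
qed

lemma func_forest_subset:
  assumes F: "func_forest n F" and "G \<subseteq> F"
  shows "func_forest n G"
proof -
  have "\<exists>r. (x,r) \<in> G\<^sup>* \<and> r \<notin> Domain G" if "x < n" for x
    using rtrancl_root_of[OF F that]
  proof (induction rule: converse_rtrancl_induct)
    case base
    then show ?case using root_of_notin_Domain[OF F that] \<open>G \<subseteq> F\<close> by blast
  next
    case (step y z)
    show ?case
    proof (cases "y \<in> Domain G")
      case True
      then obtain z' where "(y,z') \<in> G" by blast
      moreover from this have "z' = z"
        using step(1) \<open>G \<subseteq> F\<close> func_forestD(2)[OF F] unfolding single_valued_def by blast
      moreover obtain r where "(z,r) \<in> G\<^sup>*" "r \<notin> Domain G" using step.IH by blast
      ultimately show ?thesis by (meson converse_rtrancl_into_rtrancl)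
    qed blast
  qed
  with assms single_valued_subset[OF assms(2) func_forestD(2)[OF F]] show ?thesis
    unfolding func_forest_def by blast
qed

lemma card_weak_comps_func_forest:
  "func_forest n F \<Longrightarrow> card (weak_comps {..<n} F) = n - card F"
  using card_func_forest_roots card_weak_comps by (metis add_diff_cancel_left')

definition forests :: "nat \<Rightarrow> real mat \<Rightarrow> nat \<Rightarrow> (nat \<times> nat) set set" where
  "forests n W k = {F. in_forest n W F \<and> card F = k}"

lemma forests_iff: "F \<in> forests n W k \<longleftrightarrow> F \<subseteq> arcs n W \<and> func_forest n F \<and> card F = k"
  unfolding forests_def in_forest_iff by simp

lemma finite_arcs: "finite (arcs n W)"
  by (rule finite_subset[of _ "{..<n} \<times> {..<n}"]) (auto simp: arcs_def)

lemma finite_forests: "finite (forests n W k)"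
  by (rule finite_subset[of _ "Pow (arcs n W)"]) (auto simp: forests_iff finite_arcs)

lemma forests_0: "forests n W 0 = {{}}"
proof -
  have "F = {}" if "F \<in> forests n W 0" for F
    using that by (meson card_0_eq finite_arcs finite_subset forests_iff)
  moreover have "{} \<in> forests n W 0" by (simp add: forests_iff func_forest_empty)
  ultimately show ?thesis by blast
qed

lemma forest_dim_spec:
  shows "\<exists>F. F \<subseteq> arcs n W \<and> func_forest n F \<and> card F = n - forest_dim n W"
    and "F \<subseteq> arcs n W \<Longrightarrow> func_forest n F \<Longrightarrow> card F \<le> n - forest_dim n W"
    and "forest_dim n W \<le> n"
proof -
  define S where "S = {card (weak_comps {..<n} F) | F. in_forest n W F}"
  have "S = (\<lambda>F. card (weak_comps {..<n} F)) ` {F. F \<subseteq> arcs n W \<and> func_forest n F}"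
    unfolding S_def in_forest_iff by blast
  also have "\<dots> = (\<lambda>F. n - card F) ` {F. F \<subseteq> arcs n W \<and> func_forest n F}"
    by (intro image_cong) (simp_all add: card_weak_comps_func_forest)
  finally have S: "S = (\<lambda>F. n - card F) ` {F. F \<subseteq> arcs n W \<and> func_forest n F}" .
  have "finite S" unfolding S using finite_arcs by simp
  have d: "forest_dim n W = Min S" unfolding forest_dim_def S_def ..
  have "S \<noteq> {}" unfolding S using func_forest_empty by blast
  with \<open>finite S\<close> have "Min S \<in> S" by simp
  then obtain F0 where F0: "F0 \<subseteq> arcs n W" "func_forest n F0" "forest_dim n W = n - card F0"
    unfolding S d by blast
  moreover have "card F0 \<le> n" using card_func_forest_roots[OF F0(2)] by linarith
  ultimately show "\<exists>F. F \<subseteq> arcs n W \<and> func_forest n F \<and> card F = n - forest_dim n W"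
    by (intro exI[of _ F0]) simp
  have "n \<in> S" unfolding S using func_forest_empty by force
  then show "forest_dim n W \<le> n" unfolding d using \<open>finite S\<close> by simp
  assume "F \<subseteq> arcs n W" "func_forest n F"
  then have "n - card F \<in> S" unfolding S by blast
  then have "Min S \<le> n - card F" using \<open>finite S\<close> by simp
  then show "card F \<le> n - forest_dim n W"
    unfolding d using card_func_forest_roots[OF \<open>func_forest n F\<close>] by linarith
qed

lemma forests_empty:
  assumes "n - forest_dim n W < k"
  shows "forests n W k = {}"
proof -
  have False if "F \<in> forests n W k" for F
    using forest_dim_spec(2)[of F n W] that assms by (simp add: forests_iff)
  then show ?thesis by blast
qed

lemma forests_nonempty:
  assumes "k \<le> n - forest_dim n W"
  shows "forests n W k \<noteq> {}"
proof -
  obtain F where F: "F \<subseteq> arcs n W" "func_forest n F" "card F = n - forest_dim n W"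
    using forest_dim_spec(1) by blast
  with assms have "k \<le> card F" by simp
  then obtain G where "G \<subseteq> F" "card G = k" "finite G"
    by (rule obtain_subset_with_card_n)
  with F func_forest_subset have "G \<in> forests n W k" unfolding forests_iff by blast
  then show ?thesis by blast
qed

lemma weight_pos:
  assumes "F \<subseteq> arcs n W"
  shows "weight W F > 0"
proof -
  have "\<forall>e\<in>F. W $$ e > 0" using assms unfolding arcs_def by auto
  then show ?thesis unfolding weight_def by (intro prod_pos) auto
qed

lemma sigma_eq: "sigma n W k = (\<Sum>F\<in>forests n W k. weight W F)"
  unfolding sigma_def forests_def ..

lemma sigma_0: "sigma n W 0 = 1"
  unfolding sigma_eq forests_0 by (simp add: weight_def)

lemma sigma_eq_0: "n - forest_dim n W < k \<Longrightarrow> sigma n W k = 0"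
  unfolding sigma_eq by (simp add: forests_empty)

lemma sigma_pos:
  assumes "k \<le> n - forest_dim n W"
  shows "sigma n W k > 0"
  unfolding sigma_eq
proof (rule sum_pos)
  show "forests n W k \<noteq> {}" using forests_nonempty[OF assms] .
  show "0 < weight W F" if "F \<in> forests n W k" for F
    using that weight_pos unfolding forests_iff by blast
qed (rule finite_forests)

lemma Qmat_index:
  assumes "i < n" "j < n"
  shows "Qmat n W k $$ (i,j) = (\<Sum>F\<in>forests n W k. weight W F * of_bool (root_of F i = j))"
proof -
  have "{F. in_forest n W F \<and> card F = k \<and> rooted_at n F i j}
      = {F \<in> forests n W k. root_of F i = j}"
    using rooted_at_iff[OF _ assms(1)] by (auto simp: forests_iff in_forest_iff)
  then have "Qmat n W k $$ (i,j) = (\<Sum>F\<in>{F \<in> forests n W k. root_of F i = j}. weight W F)"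
    unfolding Qmat_def using assms by simp
  also have "\<dots> = (\<Sum>F\<in>forests n W k. if root_of F i = j then weight W F else 0)"
    by (rule sum.inter_filter[OF finite_forests])
  also have "\<dots> = (\<Sum>F\<in>forests n W k. weight W F * of_bool (root_of F i = j))"
    by (rule sum.cong) auto
  finally show ?thesis .
qed

lemma Qmat_dim [simp]: "dim_row (Qmat n W k) = n" "dim_col (Qmat n W k) = n"
  unfolding Qmat_def by simp_all

lemma Qmat_carrier: "Qmat n W k \<in> carrier_mat n n"
  unfolding carrier_mat_def by simp

lemma Qmat_0: "Qmat n W 0 = 1\<^sub>m n"
proof (rule eq_matI)
  fix i j assume "i < dim_row (1\<^sub>m n)" "j < dim_col (1\<^sub>m n)"
  then show "Qmat n W 0 $$ (i,j) = 1\<^sub>m n $$ (i,j)"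
    by (simp add: Qmat_index forests_0 weight_def root_of_sink)
qed simp_all

lemma Qmat_eq_0:
  assumes "n - forest_dim n W < k"
  shows "Qmat n W k = 0\<^sub>m n n"
proof (rule eq_matI)
  fix i j assume "i < dim_row (0\<^sub>m n n :: real mat)" "j < dim_col (0\<^sub>m n n :: real mat)"
  then show "Qmat n W k $$ (i,j) = 0\<^sub>m n n $$ (i,j)"
    by (simp add: Qmat_index forests_empty[OF assms])
qed simp_all

section \<open>Moving a single arc\<close>

definition parent :: "(nat \<times> nat) set \<Rightarrow> nat \<Rightarrow> nat" where
  "parent F i = (THE s. (i,s) \<in> F)"

lemma parent_eq: "single_valued F \<Longrightarrow> (i,s) \<in> F \<Longrightarrow> parent F i = s"
  unfolding parent_def single_valued_def by blast

lemma parent_in: "single_valued F \<Longrightarrow> i \<in> Domain F \<Longrightarrow> (i, parent F i) \<in> F"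
  using parent_eq by blast

lemma rtrancl_Diff_avoiding:
  assumes "(x,r) \<in> F\<^sup>*" "(x,i) \<notin> F\<^sup>*"
  shows "(x,r) \<in> (F - {(i,s)})\<^sup>*"
  using assms
proof (induction rule: converse_rtrancl_induct)
  case (step x y)
  have "(y,i) \<notin> F\<^sup>*" using step.prems converse_rtrancl_into_rtrancl[OF step.hyps(1)] by blast
  moreover have "(x,y) \<in> F - {(i,s)}" using step.hyps(1) step.prems by auto
  ultimately show ?case using step.IH by (blast intro: converse_rtrancl_into_rtrancl)
qed simp

lemma func_forest_acyclic:
  assumes F: "func_forest n F" and "(i,s) \<in> F"
  shows "(s,i) \<notin> F\<^sup>*"
proof
  assume si: "(s,i) \<in> F\<^sup>*"
  txt \<open>Out-arcs are unique, so every walk from i can be continued back to i.\<close>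
  have "(y,i) \<in> F\<^sup>*" if "(i,y) \<in> F\<^sup>*" for y
    using that
  proof induction
    case (step y z)
    show ?case
    proof (cases "y = i")
      case True
      then show ?thesis
        using step(2) \<open>(i,s) \<in> F\<close> si func_forestD(2)[OF F] unfolding single_valued_def by blast
    next
      case False
      with step.IH obtain c where "(y,c) \<in> F" "(c,i) \<in> F\<^sup>*" by (auto elim: converse_rtranclE)
      with step(2) show ?thesis using func_forestD(2)[OF F] unfolding single_valued_def by blast
    qed
  qed simp
  moreover have "i < n" using assms func_forestD(1) by blast
  ultimately have "(root_of F i, i) \<in> F\<^sup>*" using rtrancl_root_of[OF F] by blast
  then have "root_of F i = i" using root_of_notin_Domain[OF F \<open>i < n\<close>]
    by (auto elim: converse_rtranclE)
  with \<open>(i,s) \<in> F\<close> root_of_notin_Domain[OF F \<open>i < n\<close>] show False by auto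
qed

lemma root_of_Diff:
  assumes F: "func_forest n F" and "x < n" "(x,i) \<notin> F\<^sup>*"
  shows "root_of (F - {(i,s)}) x = root_of F x"
proof (rule root_of_eqI)
  show "single_valued (F - {(i,s)})"
    by (rule single_valued_subset[OF Diff_subset func_forestD(2)[OF F]])
  show "(x, root_of F x) \<in> (F - {(i,s)})\<^sup>*"
    by (rule rtrancl_Diff_avoiding[OF rtrancl_root_of[OF F \<open>x < n\<close>] \<open>(x,i) \<notin> F\<^sup>*\<close>])
  show "root_of F x \<notin> Domain (F - {(i,s)})"
    using root_of_notin_Domain[OF F \<open>x < n\<close>] Domain_mono[OF Diff_subset] by blast
qed

lemma
  assumes F: "func_forest n F" and "i \<notin> Domain F" "i < n" "p < n" "root_of F p \<noteq> i"
  shows func_forest_insert: "func_forest n (insert (i,p) F)"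
    and root_of_insert: "x < n \<Longrightarrow>
      root_of (insert (i,p) F) x = (if root_of F x = i then root_of F p else root_of F x)"
proof -
  define G where "G = insert (i,p) F"
  define r where "r x = (if root_of F x = i then root_of F p else root_of F x)" for x
  have sv: "single_valued G"
    using func_forestD(2)[OF F] \<open>i \<notin> Domain F\<close> unfolding G_def single_valued_def by blast
  have FG: "F\<^sup>* \<subseteq> G\<^sup>*" unfolding G_def by (rule rtrancl_mono) blast
  have sink: "(x, r x) \<in> G\<^sup>* \<and> r x \<notin> Domain G" if "x < n" for x
  proof (cases "root_of F x = i")
    case True
    have "(x,i) \<in> G\<^sup>*" using True rtrancl_root_of[OF F that] FG by auto
    moreover have "(i,p) \<in> G" unfolding G_def by simp
    moreover have "(p, root_of F p) \<in> G\<^sup>*" using rtrancl_root_of[OF F \<open>p < n\<close>] FG by auto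
    ultimately have "(x, root_of F p) \<in> G\<^sup>*"
      by (rule rtrancl_trans[OF rtrancl_into_rtrancl])
    with True show ?thesis
      using root_of_notin_Domain[OF F \<open>p < n\<close>] \<open>root_of F p \<noteq> i\<close> unfolding G_def r_def by simp
  next
    case False
    then show ?thesis
      using rtrancl_root_of[OF F that] root_of_notin_Domain[OF F that] FG
      unfolding G_def r_def by auto
  qed
  have "G \<subseteq> {..<n} \<times> {..<n}" using func_forestD(1)[OF F] assms unfolding G_def by blast
  with sv sink have "func_forest n G" unfolding func_forest_def by blast
  then show "func_forest n (insert (i,p) F)" unfolding G_def .
  show "root_of (insert (i,p) F) x = r x" if "x < n"
    using root_of_eqI[OF sv] sink[OF that] unfolding G_def by blast
qed

lemma weight_insert: "finite F \<Longrightarrow> e \<notin> F \<Longrightarrow> weight W (insert e F) = weight W F * W $$ e"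
  unfolding weight_def by (simp add: split_def)

lemma weight_Diff: "finite F \<Longrightarrow> e \<in> F \<Longrightarrow> weight W F = weight W (F - {e}) * W $$ e"
  using weight_insert[of "F - {e}" e W] by (simp add: insert_absorb)

lemma attach_arc:
  assumes F: "func_forest n F" and "i \<notin> Domain F" "i < n" "p < n" "root_of F p \<noteq> i"
  defines "G \<equiv> insert (i,p) F"
  shows "card G = Suc (card F)" "G - {(i,p)} = F" "weight W G = weight W F * W $$ (i,p)"
    "i \<in> Domain G" "parent G i = p" "root_of G i = root_of F p"
proof -
  have "(i,p) \<notin> F" using \<open>i \<notin> Domain F\<close> by (meson Domain.DomainI)
  with func_forestD(3)[OF F]
  show "card G = Suc (card F)" "G - {(i,p)} = F" "weight W G = weight W F * W $$ (i,p)"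
    unfolding G_def by (simp_all add: weight_insert)
  show "i \<in> Domain G" unfolding G_def by blast
  show "parent G i = p"
    unfolding G_def
    by (rule parent_eq[OF func_forestD(2)[OF func_forest_insert[OF assms(1-5)]]]) simp
  show "root_of G i = root_of F p"
    using root_of_insert[OF assms(1-5) \<open>i < n\<close>] root_of_sink[OF func_forestD(2)[OF F] assms(2)]
    unfolding G_def by simp
qed

lemma detach_arc:
  assumes G: "func_forest n G" and "i \<in> Domain G"
  defines "s \<equiv> parent G i"
  shows "(i,s) \<in> G" "i \<notin> Domain (G - {(i,s)})" "s < n" "root_of (G - {(i,s)}) s \<noteq> i"
    "Suc (card (G - {(i,s)})) = card G" "insert (i,s) (G - {(i,s)}) = G"
proof -
  note sv = func_forestD(2)[OF G]
  show "(i,s)": "(i,s) \<in> G" unfolding s_def using parent_in[OF sv \<open>i \<in> Domain G\<close>] .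
  then show "i \<notin> Domain (G - {(i,s)})" using sv unfolding single_valued_def by blast
  show "s < n" using \<open>(i,s) \<in> G\<close> func_forestD(1)[OF G] by blast
  have "root_of (G - {(i,s)}) s = root_of G s"
    using root_of_Diff[OF G \<open>s < n\<close> func_forest_acyclic[OF G \<open>(i,s) \<in> G\<close>]] .
  with root_of_notin_Domain[OF G \<open>s < n\<close>] \<open>i \<in> Domain G\<close>
  show "root_of (G - {(i,s)}) s \<noteq> i" by auto
  show "Suc (card (G - {(i,s)})) = card G"
    using \<open>(i,s) \<in> G\<close> func_forestD(3)[OF G] by (metis card_Suc_Diff1)
  show "insert (i,s) (G - {(i,s)}) = G" using \<open>(i,s) \<in> G\<close> by blast
qed

lemma swap_arc:
  assumes F: "func_forest n F" and "i \<in> Domain F" "p < n" and ne: "root_of F i \<noteq> root_of F p"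
  defines "s \<equiv> parent F i"
  defines "G \<equiv> insert (i,p) (F - {(i,s)})"
  shows "func_forest n G" "card G = card F" "(i,s) \<in> F" "i \<in> Domain G" "parent G i = p"
    "insert (i,s) (G - {(i,p)}) = F" "root_of G i = root_of F p" "root_of G s = root_of F i"
    "weight W G * W $$ (i,s) = weight W F * W $$ (i,p)"
proof -
  define F' where "F' = F - {(i,s)}"
  note d = detach_arc[OF F \<open>i \<in> Domain F\<close>, folded s_def, folded F'_def]
  have F': "func_forest n F'" unfolding F'_def using func_forest_subset[OF F] by blast
  have "i < n" using d(1) func_forestD(1)[OF F] by blast
  have "(p,i) \<notin> F\<^sup>*"
  proof
    assume "(p,i) \<in> F\<^sup>*"
    then have "(p,i) \<in> (F \<union> F\<inverse>)\<^sup>*" using rtrancl_mono[of F "F \<union> F\<inverse>"] by blast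
    with ne show False using root_of_weak_path[OF F] by metis
  qed
  then have F'p: "root_of F' p = root_of F p" unfolding F'_def
    using root_of_Diff[OF F \<open>p < n\<close>] by blast
  have "root_of F p \<noteq> i" using root_of_notin_Domain[OF F \<open>p < n\<close>] \<open>i \<in> Domain F\<close> by auto
  then have F'p_i: "root_of F' p \<noteq> i" using F'p by simp
  have G: "G = insert (i,p) F'" unfolding G_def F'_def ..
  note a = attach_arc[OF F' d(2) \<open>i < n\<close> \<open>p < n\<close> F'p_i, folded G]
  show "func_forest n G" unfolding G using func_forest_insert[OF F' d(2) \<open>i < n\<close> \<open>p < n\<close> F'p_i] .
  show "card G = card F" using a(1) d(5) by simp
  show "(i,s) \<in> F" "i \<in> Domain G" "parent G i = p" using d(1) a(4,5) by simp_all
  show "insert (i,s) (G - {(i,p)}) = F" using a(2) d(6) by simp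
  show "root_of G i = root_of F p" using a(6) F'p by simp
  have "root_of F' s = root_of F i"
    using root_of_Diff[OF F d(3) func_forest_acyclic[OF F d(1)]] root_of_step[OF F d(1)]
    unfolding F'_def by simp
  moreover have "root_of F i \<noteq> i" using root_of_notin_Domain[OF F \<open>i < n\<close>] \<open>i \<in> Domain F\<close> by auto
  ultimately show "root_of G s = root_of F i"
    unfolding G using root_of_insert[OF F' d(2) \<open>i < n\<close> \<open>p < n\<close> F'p_i d(3)] by simp
  show "weight W G * W $$ (i,s) = weight W F * W $$ (i,p)"
    using a(3) weight_Diff[OF func_forestD(3)[OF F] d(1), of W] unfolding F'_def by simp
qed

section \<open>The matrix-forest recurrence\<close>

lemma sum_sign_reversing_involution:
  fixes g :: "'a \<Rightarrow> 'b::linordered_ab_group_add"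
  assumes "finite S" and "\<And>x. x \<in> S \<Longrightarrow> \<phi> x \<in> S" and "\<And>x. x \<in> S \<Longrightarrow> \<phi> (\<phi> x) = x"
    and "\<And>x. x \<in> S \<Longrightarrow> g (\<phi> x) = - g x"
  shows "sum g S = 0"
proof -
  have "sum g S = sum (\<lambda>x. g (\<phi> x)) S"
    by (rule sum.reindex_bij_witness[of S \<phi> \<phi>]) (simp_all add: assms(2,3))
  also have "\<dots> = - sum g S"
    using assms(4) by (simp add: sum_negf[symmetric])
  finally show ?thesis by simp
qed

lemma sum_filter_split:
  "finite A \<Longrightarrow> sum g A = sum g {x \<in> A. P x} + sum g {x \<in> A. \<not> P x}"
  using sum.Int_Diff[of A g "{x. P x}"] by (simp add: Int_def set_diff_eq)

definition out_nbrs :: "nat \<Rightarrow> real mat \<Rightarrow> nat \<Rightarrow> nat set" where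
  "out_nbrs n W i = {p. (i,p) \<in> arcs n W}"

lemma finite_out_nbrs: "finite (out_nbrs n W i)"
  unfolding out_nbrs_def arcs_def by (rule finite_subset[of _ "{..<n}"]) auto

definition laplacian_term :: "real mat \<Rightarrow> nat \<Rightarrow> nat \<Rightarrow> (nat \<times> nat) set \<Rightarrow> nat \<Rightarrow> real" where
  "laplacian_term W i j F p =
     weight W F * W $$ (i,p) * (of_bool (root_of F i = j) - of_bool (root_of F p = j))"

text \<open>Exchanging the out-arc of i for the arc from i to p is a sign-reversing involution.\<close>

lemma sum_swap_pairs_eq_0:
  "(\<Sum>(F,p) \<in> {(F,p) \<in> forests n W k \<times> out_nbrs n W i. i \<in> Domain F \<and> root_of F i \<noteq> root_of F p}.
      laplacian_term W i j F p) = 0"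
proof (rule sum_sign_reversing_involution
    [where \<phi> = "\<lambda>(F,p). (insert (i,p) (F - {(i, parent F i)}), parent F i)"])
  show "finite {(F,p) \<in> forests n W k \<times> out_nbrs n W i. i \<in> Domain F \<and> root_of F i \<noteq> root_of F p}"
    by (rule finite_subset[OF _ finite_cartesian_product[OF finite_forests finite_out_nbrs]]) auto
next
  fix x assume "x \<in> {(F,p) \<in> forests n W k \<times> out_nbrs n W i.
      i \<in> Domain F \<and> root_of F i \<noteq> root_of F p}"
  then obtain F p where x: "x = (F,p)" and F: "F \<subseteq> arcs n W" "func_forest n F" "card F = k"
    and p: "(i,p) \<in> arcs n W" and i: "i \<in> Domain F" and ne: "root_of F i \<noteq> root_of F p"
    by (auto simp: forests_iff out_nbrs_def)
  have "p < n" using p unfolding arcs_def by simp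
  note sw = swap_arc[OF F(2) i \<open>p < n\<close> ne]
  show "(case x of (F,p) \<Rightarrow> (insert (i,p) (F - {(i, parent F i)}), parent F i))
      \<in> {(F,p) \<in> forests n W k \<times> out_nbrs n W i. i \<in> Domain F \<and> root_of F i \<noteq> root_of F p}"
    using sw F p ne by (auto simp: x forests_iff out_nbrs_def)
  show "(case (case x of (F,p) \<Rightarrow> (insert (i,p) (F - {(i, parent F i)}), parent F i)) of
        (F,p) \<Rightarrow> (insert (i,p) (F - {(i, parent F i)}), parent F i)) = x"
    using sw(5,6) by (simp add: x)
  show "(case (case x of (F,p) \<Rightarrow> (insert (i,p) (F - {(i, parent F i)}), parent F i)) of
        (F,p) \<Rightarrow> laplacian_term W i j F p) = - (case x of (F,p) \<Rightarrow> laplacian_term W i j F p)"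
    using sw(7-9) by (simp add: x laplacian_term_def algebra_simps)
qed

text \<open>Attaching the arc from i to p at the root i is a bijection onto the in-forests with one
  more arc in which i is not a root.\<close>

lemma sum_attach_pairs:
  assumes "i < n"
  shows "(\<Sum>(F,p) \<in> {(F,p) \<in> forests n W k \<times> out_nbrs n W i.
      i \<notin> Domain F \<and> root_of F i \<noteq> root_of F p}.
      laplacian_term W i j F p)
    = (\<Sum>G \<in> {G \<in> forests n W (Suc k). i \<in> Domain G}.
      weight W G * (of_bool (i = j) - of_bool (root_of G i = j)))"
proof (rule sum.reindex_bij_witness
    [where j = "\<lambda>(F,p). insert (i,p) F" and i = "\<lambda>G. (G - {(i, parent G i)}, parent G i)"])
  fix x assume "x \<in> {(F,p) \<in> forests n W k \<times> out_nbrs n W i.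
      i \<notin> Domain F \<and> root_of F i \<noteq> root_of F p}"
  then obtain F p where x: "x = (F,p)" and F: "F \<subseteq> arcs n W" "func_forest n F" "card F = k"
    and p: "(i,p) \<in> arcs n W" and i: "i \<notin> Domain F" and ne: "root_of F i \<noteq> root_of F p"
    by (auto simp: forests_iff out_nbrs_def)
  have "p < n" using p unfolding arcs_def by simp
  have root_i: "root_of F i = i" using root_of_sink[OF func_forestD(2)[OF F(2)] i] .
  with ne have "root_of F p \<noteq> i" by simp
  note a = attach_arc[OF F(2) i \<open>i < n\<close> \<open>p < n\<close> this]
  note G = func_forest_insert[OF F(2) i \<open>i < n\<close> \<open>p < n\<close> \<open>root_of F p \<noteq> i\<close>]
  show "(case x of (F,p) \<Rightarrow> insert (i,p) F) \<in> {G \<in> forests n W (Suc k). i \<in> Domain G}"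
    using a(1,4) G F p by (simp add: x forests_iff)
  show "(\<lambda>G. (G - {(i, parent G i)}, parent G i)) (case x of (F,p) \<Rightarrow> insert (i,p) F) = x"
    using a(2,5) by (simp add: x)
  show "weight W (case x of (F,p) \<Rightarrow> insert (i,p) F) *
      (of_bool (i = j) - of_bool (root_of (case x of (F,p) \<Rightarrow> insert (i,p) F) i = j))
    = (case x of (F,p) \<Rightarrow> laplacian_term W i j F p)"
    using a(3,6) root_i by (simp add: x laplacian_term_def)
next
  fix G assume "G \<in> {G \<in> forests n W (Suc k). i \<in> Domain G}"
  then have G: "G \<subseteq> arcs n W" "func_forest n G" "card G = Suc k" and i: "i \<in> Domain G"
    by (auto simp: forests_iff)
  note d = detach_arc[OF G(2) i]
  have G': "func_forest n (G - {(i, parent G i)})" using func_forest_subset[OF G(2)] by blast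
  moreover have "root_of (G - {(i, parent G i)}) i = i"
    using root_of_sink[OF func_forestD(2)[OF G'] d(2)] .
  ultimately show "(\<lambda>G. (G - {(i, parent G i)}, parent G i)) G
      \<in> {(F,p) \<in> forests n W k \<times> out_nbrs n W i. i \<notin> Domain F \<and> root_of F i \<noteq> root_of F p}"
    using d G by (auto simp: forests_iff out_nbrs_def)
  show "(case (\<lambda>G. (G - {(i, parent G i)}, parent G i)) G of (F,p) \<Rightarrow> insert (i,p) F) = G"
    using d(6) by simp
qed

lemma sum_laplacian_terms:
  assumes "i < n"
  shows "(\<Sum>(F,p) \<in> forests n W k \<times> out_nbrs n W i. laplacian_term W i j F p)
    = (\<Sum>G \<in> {G \<in> forests n W (Suc k). i \<in> Domain G}.
        weight W G * (of_bool (i = j) - of_bool (root_of G i = j)))"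
proof -
  let ?P = "forests n W k \<times> out_nbrs n W i"
  let ?R = "{(F,p) \<in> ?P. root_of F i \<noteq> root_of F p}"
  have "finite ?P" using finite_forests finite_out_nbrs by simp
  then have "finite ?R" by (rule finite_subset[rotated]) auto
  have "(\<Sum>(F,p) \<in> ?P. laplacian_term W i j F p) = (\<Sum>(F,p) \<in> ?R. laplacian_term W i j F p)"
    by (rule sum.mono_neutral_right[OF \<open>finite ?P\<close>]) (auto simp: laplacian_term_def)
  also have "\<dots> = (\<Sum>(F,p) \<in> {(F,p) \<in> ?P. i \<notin> Domain F \<and> root_of F i \<noteq> root_of F p}.
        laplacian_term W i j F p)
      + (\<Sum>(F,p) \<in> {(F,p) \<in> ?P. i \<in> Domain F \<and> root_of F i \<noteq> root_of F p}. laplacian_term W i j F p)"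
  proof -
    have "{x \<in> ?R. i \<notin> Domain (fst x)} = {(F,p) \<in> ?P. i \<notin> Domain F \<and> root_of F i \<noteq> root_of F p}"
      "{x \<in> ?R. \<not> i \<notin> Domain (fst x)} = {(F,p) \<in> ?P. i \<in> Domain F \<and> root_of F i \<noteq> root_of F p}"
      by auto
    then show ?thesis using sum_filter_split[OF \<open>finite ?R\<close>, of _ "\<lambda>x. i \<notin> Domain (fst x)"] by simp
  qed
  also have "\<dots> = (\<Sum>G \<in> {G \<in> forests n W (Suc k). i \<in> Domain G}.
      weight W G * (of_bool (i = j) - of_bool (root_of G i = j)))"
    using sum_attach_pairs[OF assms] sum_swap_pairs_eq_0 by simp
  finally show ?thesis .
qed

lemma Qmat_Suc_index_plus_laplacian_terms:
  assumes "i < n" "j < n"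
  shows "Qmat n W (Suc k) $$ (i,j)
      + (\<Sum>(F,p) \<in> forests n W k \<times> out_nbrs n W i. laplacian_term W i j F p)
    = of_bool (i = j) * sigma n W (Suc k)"
proof -
  let ?G = "forests n W (Suc k)"
  have root_i: "root_of G i = i" if "G \<in> {G \<in> ?G. i \<notin> Domain G}" for G
    using that root_of_sink func_forestD(2) by (auto simp: forests_iff)
  have "Qmat n W (Suc k) $$ (i,j)
      = (\<Sum>G \<in> {G \<in> ?G. i \<notin> Domain G}. weight W G * of_bool (root_of G i = j))
      + (\<Sum>G \<in> {G \<in> ?G. i \<in> Domain G}. weight W G * of_bool (root_of G i = j))"
    unfolding Qmat_index[OF assms]
    using sum_filter_split[OF finite_forests, of _ _ _ _ "\<lambda>G. i \<notin> Domain G"]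
    by simp
  also have "\<dots> = (\<Sum>G \<in> {G \<in> ?G. i \<notin> Domain G}. weight W G * of_bool (i = j))
      + (\<Sum>G \<in> {G \<in> ?G. i \<in> Domain G}. weight W G * of_bool (root_of G i = j))"
    using root_i by simp
  moreover have "sigma n W (Suc k)
      = (\<Sum>G \<in> {G \<in> ?G. i \<notin> Domain G}. weight W G) + (\<Sum>G \<in> {G \<in> ?G. i \<in> Domain G}. weight W G)"
    unfolding sigma_eq
    using sum_filter_split[OF finite_forests, of _ _ _ _ "\<lambda>G. i \<notin> Domain G"] by simp
  ultimately show ?thesis
    unfolding sum_laplacian_terms[OF assms(1)]
    by (simp add: sum.distrib[symmetric] sum_distrib_right algebra_simps)
qed

lemma laplacian_carrier: "laplacian n W \<in> carrier_mat n n"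
  unfolding laplacian_def by simp

lemma laplacian_mult_index:
  assumes diag: "\<forall>i<n. W $$ (i,i) = 0" and nonneg: "\<forall>i<n. \<forall>j<n. W $$ (i,j) \<ge> 0"
    and M: "M \<in> carrier_mat n n" and "i < n" "j < n"
  shows "(laplacian n W * M) $$ (i,j)
    = (\<Sum>p \<in> out_nbrs n W i. W $$ (i,p) * (M $$ (i,j) - M $$ (p,j)))"
proof -
  let ?L = "laplacian n W"
  have "(?L * M) $$ (i,j) = (\<Sum>p<n. ?L $$ (i,p) * M $$ (p,j))"
    using assms by (simp add: laplacian_def scalar_prod_def atLeast0LessThan)
  also have "\<dots> = ?L $$ (i,i) * M $$ (i,j) + (\<Sum>p \<in> {..<n} - {i}. ?L $$ (i,p) * M $$ (p,j))"
    using \<open>i < n\<close> by (subst sum.remove[of _ i]) auto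
  also have "\<dots> = (\<Sum>p \<in> {..<n} - {i}. W $$ (i,p) * (M $$ (i,j) - M $$ (p,j)))"
    using \<open>i < n\<close>
    by (simp add: laplacian_def sum_distrib_right right_diff_distrib sum_subtractf sum_negf)
  also have "\<dots> = (\<Sum>p \<in> out_nbrs n W i. W $$ (i,p) * (M $$ (i,j) - M $$ (p,j)))"
  proof (rule sum.mono_neutral_right)
    show "out_nbrs n W i \<subseteq> {..<n} - {i}" unfolding out_nbrs_def arcs_def using diag by auto
    show "\<forall>p \<in> {..<n} - {i} - out_nbrs n W i. W $$ (i,p) * (M $$ (i,j) - M $$ (p,j)) = 0"
    proof
      fix p assume p: "p \<in> {..<n} - {i} - out_nbrs n W i"
      then have "\<not> W $$ (i,p) > 0" "W $$ (i,p) \<ge> 0"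
        using nonneg \<open>i < n\<close> unfolding out_nbrs_def arcs_def by auto
      then show "W $$ (i,p) * (M $$ (i,j) - M $$ (p,j)) = 0" by simp
    qed
  qed simp
  finally show ?thesis .
qed

lemma laplacian_mult_Qmat_index:
  assumes "\<forall>i<n. W $$ (i,i) = 0" "\<forall>i<n. \<forall>j<n. W $$ (i,j) \<ge> 0" "i < n" "j < n"
  shows "(laplacian n W * Qmat n W k) $$ (i,j)
    = (\<Sum>(F,p) \<in> forests n W k \<times> out_nbrs n W i. laplacian_term W i j F p)"
proof -
  have "(laplacian n W * Qmat n W k) $$ (i,j)
      = (\<Sum>p \<in> out_nbrs n W i. \<Sum>F \<in> forests n W k. laplacian_term W i j F p)"
    unfolding laplacian_mult_index[OF assms(1,2) Qmat_carrier assms(3,4)]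
  proof (rule sum.cong[OF refl])
    fix p assume "p \<in> out_nbrs n W i"
    then have "p < n" unfolding out_nbrs_def arcs_def by simp
    then show "W $$ (i,p) * (Qmat n W k $$ (i,j) - Qmat n W k $$ (p,j))
        = (\<Sum>F \<in> forests n W k. laplacian_term W i j F p)"
      unfolding Qmat_index[OF assms(3,4)] Qmat_index[OF \<open>p < n\<close> assms(4)] laplacian_term_def
      by (simp add: sum_distrib_left sum_subtractf[symmetric] algebra_simps)
  qed
  also have "\<dots> = (\<Sum>(F,p) \<in> forests n W k \<times> out_nbrs n W i. laplacian_term W i j F p)"
    by (subst sum.swap) (rule sum.cartesian_product)
  finally show ?thesis .
qed

lemma Qmat_recurrence:
  assumes "\<forall>i<n. W $$ (i,i) = 0" "\<forall>i<n. \<forall>j<n. W $$ (i,j) \<ge> 0"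
  shows "Qmat n W (Suc k) + laplacian n W * Qmat n W k = sigma n W (Suc k) \<cdot>\<^sub>m 1\<^sub>m n"
proof (rule eq_matI)
  fix i j assume "i < dim_row (sigma n W (Suc k) \<cdot>\<^sub>m 1\<^sub>m n)" "j < dim_col (sigma n W (Suc k) \<cdot>\<^sub>m 1\<^sub>m n)"
  then have ij: "i < n" "j < n" by simp_all
  then show "(Qmat n W (Suc k) + laplacian n W * Qmat n W k) $$ (i,j)
      = (sigma n W (Suc k) \<cdot>\<^sub>m 1\<^sub>m n) $$ (i,j)"
    using Qmat_Suc_index_plus_laplacian_terms[OF ij] laplacian_mult_Qmat_index[OF assms ij]
    by (simp add: laplacian_def mult.commute)
qed (simp_all add: laplacian_def)

section \<open>Matrix sequences obeying the recurrence\<close>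

lemma add_right_cancel_mat:
  fixes A B X :: "'a::cancel_semigroup_add mat"
  assumes "A \<in> carrier_mat n m" "B \<in> carrier_mat n m" "X \<in> carrier_mat n m" "A + X = B + X"
  shows "A = B"
proof (rule eq_matI)
  fix i j assume ij: "i < dim_row B" "j < dim_col B"
  have "(A + X) $$ (i,j) = (B + X) $$ (i,j)" using assms(4) by simp
  with assms(1-3) ij show "A $$ (i,j) = B $$ (i,j)" by simp
qed (use assms in auto)

locale matrix_recurrence =
  fixes n :: nat and L :: "'a::comm_ring_1 mat" and Q :: "nat \<Rightarrow> 'a mat" and s :: "nat \<Rightarrow> 'a"
  assumes L_carrier [simp]: "L \<in> carrier_mat n n" and Q_carrier [simp]: "Q k \<in> carrier_mat n n"
    and Q_0: "Q 0 = s 0 \<cdot>\<^sub>m 1\<^sub>m n"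
    and Q_Suc: "Q (Suc k) + L * Q k = s (Suc k) \<cdot>\<^sub>m 1\<^sub>m n"
begin

lemma Q_dim [simp]: "dim_row (Q k) = n" "dim_col (Q k) = n"
  using carrier_matD[OF Q_carrier] by simp_all

text \<open>\<open>mult_carrier_mat\<close> with the inner dimension fixed, so that the simplifier can use it.\<close>

lemma mult_carrier_mat_square [simp]:
  "A \<in> carrier_mat n n \<Longrightarrow> B \<in> carrier_mat n n \<Longrightarrow> A * B \<in> carrier_mat n n"
  by (rule mult_carrier_mat)

lemma scalar_mult_commute:
  fixes A :: "'a mat"
  assumes "A \<in> carrier_mat n n"
  shows "A * (c \<cdot>\<^sub>m 1\<^sub>m n) = c \<cdot>\<^sub>m A" "(c \<cdot>\<^sub>m 1\<^sub>m n) * A = c \<cdot>\<^sub>m A"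
  using assms
    by (simp_all add: mult_smult_distrib[of A n n "1\<^sub>m n" n] mult_smult_assoc_mat[of "1\<^sub>m n" n n A n])

lemma L_Q_commute: "L * Q k = Q k * L"
proof (induction k)
  case 0
  show ?case unfolding Q_0 scalar_mult_commute[OF L_carrier] ..
next
  case (Suc k)
  have "L * Q (Suc k) + L * (L * Q k) = L * (Q (Suc k) + L * Q k)"
    by (simp add: mult_add_distrib_mat[of L n n "Q (Suc k)" n "L * Q k"])
  also have "\<dots> = (Q (Suc k) + L * Q k) * L"
    unfolding Q_Suc scalar_mult_commute[OF L_carrier] ..
  also have "\<dots> = Q (Suc k) * L + L * (Q k * L)"
    by (simp add: add_mult_distrib_mat[of "Q (Suc k)" n n "L * Q k" L n]
        assoc_mult_mat[of L n n "Q k" n L n])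
  finally have "L * Q (Suc k) + L * (L * Q k) = Q (Suc k) * L + L * (L * Q k)"
    unfolding Suc.IH .
  then show ?case by (rule add_right_cancel_mat[where n = n and m = n, rotated 3]) simp_all
qed

context
  fixes m :: nat
  assumes Q_Suc_m: "Q (Suc m) = 0\<^sub>m n n" and s_Suc_m: "s (Suc m) = 0"
begin

lemma L_Q_last: "L * Q m = 0\<^sub>m n n"
proof -
  have "(0::'a) \<cdot>\<^sub>m 1\<^sub>m n = 0\<^sub>m n n" by (rule eq_matI) simp_all
  with Q_Suc[of m] show ?thesis unfolding Q_Suc_m s_Suc_m by simp
qed

lemma Q_last_L: "Q m * L = 0\<^sub>m n n"
  using L_Q_last L_Q_commute by simp

lemma Q_last_mult: "Q m * Q k = s k \<cdot>\<^sub>m Q m"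
proof (induction k)
  case 0
  show ?case unfolding Q_0 scalar_mult_commute[OF Q_carrier] ..
next
  case (Suc k)
  have "Q m * (L * Q k) = (Q m * L) * Q k"
    by (rule assoc_mult_mat[of "Q m" n n L n "Q k" n, symmetric]) simp_all
  then have "Q m * (L * Q k) = 0\<^sub>m n n" by (simp add: Q_last_L)
  then have "Q m * Q (Suc k) = Q m * (Q (Suc k) + L * Q k)"
    by (simp add: mult_add_distrib_mat[of "Q m" n n "Q (Suc k)" n "L * Q k"])
  then show ?case unfolding Q_Suc scalar_mult_commute[OF Q_carrier] .
qed

lemma mult_Q_last: "Q k * Q m = s k \<cdot>\<^sub>m Q m"
proof (induction k)
  case 0
  show ?case unfolding Q_0 scalar_mult_commute[OF Q_carrier] ..
next
  case (Suc k)
  have "(L * Q k) * Q m = L * (s k \<cdot>\<^sub>m Q m)"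
    using Suc.IH by (simp add: assoc_mult_mat[of L n n "Q k" n "Q m" n])
  also have "\<dots> = 0\<^sub>m n n"
    using L_Q_last by (simp add: mult_smult_distrib[of L n n "Q m" n])
  finally have "Q (Suc k) * Q m = (Q (Suc k) + L * Q k) * Q m"
    by (simp add: add_mult_distrib_mat[of "Q (Suc k)" n n "L * Q k" "Q m" n])
  then show ?case unfolding Q_Suc scalar_mult_commute[OF Q_carrier] .
qed

end

end

section \<open>Idempotent matrices\<close>

definition trace :: "'a::comm_ring_1 mat \<Rightarrow> 'a" where
  "trace A = (\<Sum>i<dim_row A. A $$ (i,i))"

lemma trace_mult_comm:
  fixes A B :: "'a::comm_ring_1 mat"
  assumes "A \<in> carrier_mat n m" "B \<in> carrier_mat m n"
  shows "trace (A * B) = trace (B * A)"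
proof -
  have "trace (A * B) = (\<Sum>i<n. \<Sum>k<m. A $$ (i,k) * B $$ (k,i))"
    using assms by (simp add: trace_def scalar_prod_def atLeast0LessThan)
  also have "\<dots> = (\<Sum>k<m. \<Sum>i<n. B $$ (k,i) * A $$ (i,k))"
    by (subst sum.swap) (simp add: mult.commute)
  also have "\<dots> = trace (B * A)"
    using assms by (simp add: trace_def scalar_prod_def atLeast0LessThan)
  finally show ?thesis .
qed

lemma trace_similar:
  fixes A B :: "'a::comm_ring_1 mat"
  assumes "similar_mat A B"
  shows "trace A = trace B"
proof -
  obtain n P Q where PQ: "{A,B,P,Q} \<subseteq> carrier_mat n n" "Q * P = 1\<^sub>m n" "A = P * B * Q"
    using similar_matD[OF assms] by blast
  have "P * B \<in> carrier_mat n n" using PQ(1) by auto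
  then have "trace A = trace (Q * (P * B))"
    using trace_mult_comm[of "P * B" n n Q] PQ by simp
  also have "\<dots> = trace ((Q * P) * B)"
    using PQ(1) by (simp add: assoc_mult_mat[of Q n n P n B n])
  also have "\<dots> = trace B"
    using PQ by (simp add: left_mult_one_mat[of B n n])
  finally show ?thesis .
qed

lemma idempotent_similar:
  fixes A B :: "'a::comm_ring_1 mat"
  assumes "similar_mat A B" "A * A = A"
  shows "B * B = B"
proof -
  obtain P Q where wit: "similar_mat_wit B A Q P"
    using similar_mat_sym[OF assms(1)] unfolding similar_mat_def by blast
  have "A ^\<^sub>m 2 = A ^\<^sub>m 1" using assms(2) by (simp add: numeral_2_eq_2)
  have "B * B = B ^\<^sub>m 2" by (simp add: numeral_2_eq_2)
  also have "\<dots> = Q * A ^\<^sub>m 2 * P" by (rule similar_mat_wit_pow_id[OF wit])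
  also have "\<dots> = B ^\<^sub>m 1"
    unfolding \<open>A ^\<^sub>m 2 = A ^\<^sub>m 1\<close> by (rule similar_mat_wit_pow_id[OF wit, symmetric])
  also have "\<dots> = B" by simp
  finally show ?thesis .
qed

lemma upper_triangular_idempotent_diag:
  fixes A :: "'a::idom mat"
  assumes A: "A \<in> carrier_mat n n" and ut: "upper_triangular A" and "A * A = A" "i < n"
  shows "A $$ (i,i) = 0 \<or> A $$ (i,i) = 1"
proof -
  have low: "A $$ (k,l) = 0" if "l < k" "k < n" for k l
    using ut that A unfolding upper_triangular_def by simp
  have "A $$ (i,i) = (A * A) $$ (i,i)" using \<open>A * A = A\<close> by simp
  also have "\<dots> = (\<Sum>k<n. A $$ (i,k) * A $$ (k,i))"
    using A \<open>i < n\<close> by (simp add: scalar_prod_def atLeast0LessThan)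
  also have "\<dots> = (\<Sum>k<n. if k = i then A $$ (i,i) * A $$ (i,i) else 0)"
  proof (rule sum.cong[OF refl])
    fix k assume "k \<in> {..<n}"
    then show "A $$ (i,k) * A $$ (k,i) = (if k = i then A $$ (i,i) * A $$ (i,i) else 0)"
      using low[of k i] low[of i k] \<open>i < n\<close> by (cases k i rule: linorder_cases) simp_all
  qed
  also have "\<dots> = A $$ (i,i) * A $$ (i,i)" using \<open>i < n\<close> by simp
  finally have "A $$ (i,i) * (A $$ (i,i) - 1) = 0" by (simp add: algebra_simps)
  then show ?thesis by simp
qed

lemma linear_factors_01:
  fixes xs :: "'a::comm_ring_1 list"
  assumes "set xs \<subseteq> {0,1}"
  shows "(\<Prod>a\<leftarrow>xs. [:-a,1:]) = [:-1,1:] ^ count_list xs 1 * [:0,1:] ^ count_list xs 0"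
  using assms
proof (induction xs)
  case (Cons x xs)
  then have IH: "(\<Prod>a\<leftarrow>x # xs. [:-a,1:])
      = [:-x,1:] * ([:-1,1:] ^ count_list xs 1 * [:0,1:] ^ count_list xs 0)"
    by (simp only: list.map prod_list.Cons) simp
  from Cons consider "x = 0" | "x = 1" by auto
  then show ?case
  proof cases
    case 1
    then have "count_list (x # xs) 1 = count_list xs 1"
      "count_list (x # xs) 0 = Suc (count_list xs 0)"
      by simp_all
    with IH show ?thesis by (simp only: 1 minus_zero power_Suc mult.left_commute)
  next
    case 2
    then have "count_list (x # xs) 1 = Suc (count_list xs 1)"
      "count_list (x # xs) 0 = count_list xs 0"
      by simp_all
    with IH show ?thesis by (simp only: 2 power_Suc mult.assoc)
  qed
qed simp

lemma sum_list_01: "set xs \<subseteq> {0,1} \<Longrightarrow> sum_list xs = of_nat (count_list xs (1::'a::semiring_1))"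
  by (induction xs) auto

lemma length_01: "set xs \<subseteq> {0,1} \<Longrightarrow>
  length xs = count_list xs (1::'a::zero_neq_one) + count_list xs 0"
  by (induction xs) auto

text \<open>A complex idempotent is similar to an upper triangular matrix (Schur) whose diagonal
  entries are idempotent, hence zeros and ones.\<close>

lemma char_poly_idempotent_complex:
  fixes A :: "complex mat"
  assumes A: "A \<in> carrier_mat n n" and "A * A = A"
  shows "\<exists>a \<le> n. char_poly A = [:-1,1:] ^ a * [:0,1:] ^ (n - a) \<and> trace A = of_nat a"
proof -
  obtain es where "char_poly A = (\<Prod>a\<leftarrow>es. [:-a,1:])" using char_poly_factorized[OF A] by blast
  then obtain B where B: "B \<in> carrier_mat n n" "upper_triangular B" "similar_mat A B"
    using schur_upper_triangular[OF A] by blast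
  have "B * B = B" using idempotent_similar[OF B(3) \<open>A * A = A\<close>] .
  have diag: "set (diag_mat B) \<subseteq> {0,1}"
  proof
    fix x assume "x \<in> set (diag_mat B)"
    then obtain i where "i < n" "x = B $$ (i,i)" using B(1) unfolding diag_mat_def by auto
    then show "x \<in> {0,1}" using upper_triangular_idempotent_diag[OF B(1,2) \<open>B * B = B\<close>] by blast
  qed
  have len: "length (diag_mat B) = n" using B(1) unfolding diag_mat_def by simp
  have "char_poly A = (\<Prod>a\<leftarrow>diag_mat B. [:-a,1:])"
    using char_poly_similar[OF B(3)] char_poly_upper_triangular[OF B(1,2)] by simp
  moreover have "trace A = sum_list (diag_mat B)"
    using trace_similar[OF B(3)] B(1)
    by (simp add: trace_def diag_mat_def sum_list_distinct_conv_sum_set atLeast0LessThan)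
  ultimately show ?thesis
    using linear_factors_01[OF diag] sum_list_01[OF diag] length_01[OF diag] len
    by (intro exI[of _ "count_list (diag_mat B) 1"]) auto
qed

lemma char_poly_idempotent:
  fixes A :: "real mat"
  assumes A: "A \<in> carrier_mat n n" and "A * A = A"
  obtains a where "a \<le> n" "char_poly A = [:-1,1:] ^ a * [:0,1:] ^ (n - a)" "mat_trace A = real a"
proof -
  define Ac :: "complex mat" where "Ac = of_real_hom.mat_hom A"
  have Ac: "Ac \<in> carrier_mat n n" unfolding Ac_def using A by simp
  have "Ac * Ac = Ac"
    unfolding Ac_def of_real_hom.mat_hom_mult[OF A A, symmetric] \<open>A * A = A\<close> ..
  then obtain a where a: "a \<le> n" "char_poly Ac = [:-1,1:] ^ a * [:0,1:] ^ (n - a)"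
      "trace Ac = of_nat a"
    using char_poly_idempotent_complex[OF Ac] by blast
  interpret of_real_poly: map_poly_inj_comm_ring_hom "of_real :: real \<Rightarrow> complex" ..
  have "map_poly of_real (char_poly A) = char_poly Ac"
    unfolding Ac_def by (rule of_real_hom.char_poly_hom[OF A, symmetric])
  also have "\<dots> = map_poly (of_real :: real \<Rightarrow> complex) ([:-1,1:] ^ a * [:0,1:] ^ (n - a))"
    unfolding a(2) of_real_poly.hom_mult of_real_poly.hom_power by simp
  finally have "char_poly A = [:-1,1:] ^ a * [:0,1:] ^ (n - a)"
    using of_real_poly.injectivity by blast
  moreover have "complex_of_real (mat_trace A) = trace Ac"
    using A unfolding Ac_def mat_trace_def trace_def by simp
  with a(3) have "complex_of_real (mat_trace A) = complex_of_real (real a)" by simp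
  then have "mat_trace A = real a" by (simp only: of_real_eq_iff)
  ultimately show ?thesis using a(1) that by blast
qed

lemma eig_mult_idempotent:
  assumes "char_poly A = [:-1,1:] ^ a * [:0,1:] ^ (n - a)"
  shows "eig_mult 1 A = a" "eig_mult 0 A = n - a"
proof -
  have nz: "[:-1,1:] ^ a * [:0,1:] ^ (n - a) \<noteq> (0 :: real poly)" by simp
  have "poly ([:0,1:] ^ (n - a)) (1::real) \<noteq> 0" "poly ([:-1,1:] ^ a) (0::real) \<noteq> 0" by simp_all
  from order_0I[OF this(1)] order_0I[OF this(2)]
  show "eig_mult 1 A = a" "eig_mult 0 A = n - a"
    unfolding eig_mult_def assms order_mult[OF nz]
    using order_power_n_n[of 1 a] order_power_n_n[of 0 "n - a"] by simp_all
qed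

lemma dim_gen_eigenspace_order:
  fixes A :: "'a::field mat"
  assumes A: "A \<in> carrier_mat n n" and jnf: "jordan_nf A n_as"
  shows "dim_gen_eigenspace A e n = order e (char_poly A)"
proof -
  let ?sizes = "map fst [(k,e')\<leftarrow>n_as. e' = e]"
  have "similar_mat A (jordan_matrix n_as)" using jnf unfolding jordan_nf_def by simp
  then have "jordan_matrix n_as \<in> carrier_mat n n" using similar_matD A by auto
  then have sum: "sum_list (map fst n_as) = n" using carrier_matD(1) by fastforce
  have "k \<le> n" if "k \<in> set ?sizes" for k
    using that member_le_sum_list[of k "map fst n_as"] sum by force
  then have sizes: "map (min n) ?sizes = ?sizes" by (intro map_idI) (simp add: min_absorb2)
  have "dim_gen_eigenspace A e n = sum_list ?sizes"
    unfolding dim_gen_eigenspace[OF jnf] sizes ..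
  also have "\<dots> = order e (char_poly A)"
    unfolding jordan_nf_order[OF jnf] by (simp add: case_prod_unfold)
  finally show ?thesis .
qed

lemma char_matrix_1_index:
  "A \<in> carrier_mat n n \<Longrightarrow> i < n \<Longrightarrow> j < n \<Longrightarrow>
    char_matrix A 1 $$ (i,j) = A $$ (i,j) - (if i = j then 1 else 0)"
  unfolding char_matrix_def by auto

lemma char_matrix_idempotent_sq:
  fixes A :: "'a::field mat"
  assumes A: "A \<in> carrier_mat n n" and idem: "A * A = A"
  shows "char_matrix A 1 * char_matrix A 1 = (-1) \<cdot>\<^sub>m char_matrix A 1"
proof (rule eq_matI)
  let ?N = "char_matrix A 1"
  have N: "?N \<in> carrier_mat n n" using A by simp
  fix i j assume "i < dim_row ((-1) \<cdot>\<^sub>m ?N)" "j < dim_col ((-1) \<cdot>\<^sub>m ?N)"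
  then have i: "i < n" and j: "j < n" using N by auto
  have "(?N * ?N) $$ (i,j) = (\<Sum>k\<in>{0..<n}. ?N $$ (i,k) * ?N $$ (k,j))"
    using carrier_matD[OF N] i j by (simp add: scalar_prod_def)
  also have "\<dots> = (\<Sum>k\<in>{0..<n}. A $$ (i,k) * A $$ (k,j)
       - ((if i = k then A $$ (k,j) else 0) + (if k = j then A $$ (i,k) else 0))
       + (if k = i \<and> k = j then 1 else 0))"
    using A i j by (intro sum.cong) (auto simp: char_matrix_1_index algebra_simps)
  also have "\<dots> = (\<Sum>k\<in>{0..<n}. A $$ (i,k) * A $$ (k,j)) - (A $$ (i,j) + A $$ (i,j))
       + (if i = j then 1 else 0)"
  proof -
    have "(\<Sum>k\<in>{0..<n}. (if k = i \<and> k = j then 1 else 0::'a)) = (if i = j then 1 else 0)"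
      using i j by (cases "i = j") (auto intro: sum.neutral)
    then show ?thesis using i j by (simp add: sum.distrib sum_subtractf)
  qed
  also have "(\<Sum>k\<in>{0..<n}. A $$ (i,k) * A $$ (k,j)) = (A * A) $$ (i,j)"
    using A i j by (simp add: scalar_prod_def)
  finally show "(?N * ?N) $$ (i,j) = ((-1) \<cdot>\<^sub>m ?N) $$ (i,j)"
    using A i j idem carrier_matD[OF N] by (simp add: char_matrix_1_index)
qed (use A in auto)

lemma char_matrix_idempotent_pow:
  fixes A :: "'a::field mat"
  assumes A: "A \<in> carrier_mat n n" and idem: "A * A = A"
  shows "char_matrix A 1 ^\<^sub>m Suc k = (-1) ^ k \<cdot>\<^sub>m char_matrix A 1"
proof (induction k)
  case 0
  show ?case by (rule eq_matI) (use A in auto)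
next
  case (Suc k)
  have N: "char_matrix A 1 \<in> carrier_mat n n" using A by simp
  have "char_matrix A 1 ^\<^sub>m Suc (Suc k) = ((-1) ^ k \<cdot>\<^sub>m char_matrix A 1) * char_matrix A 1"
    using Suc.IH by simp
  also have "\<dots> = (-1) ^ k \<cdot>\<^sub>m (char_matrix A 1 * char_matrix A 1)"
    by (rule mult_smult_assoc_mat[OF N N])
  also have "\<dots> = (-1) ^ Suc k \<cdot>\<^sub>m char_matrix A 1"
    unfolding char_matrix_idempotent_sq[OF A idem] by (rule eq_matI) auto
  finally show ?case .
qed

lemma kernel_dim_smult:
  fixes A :: "'a::field mat"
  assumes A: "A \<in> carrier_mat n n" and "c \<noteq> 0"
  shows "kernel_dim (c \<cdot>\<^sub>m A) = kernel_dim A"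
proof -
  have "(inverse c \<cdot>\<^sub>m 1\<^sub>m n) * (c \<cdot>\<^sub>m 1\<^sub>m n) = 1\<^sub>m n"
    by (rule eq_matI) (use \<open>c \<noteq> 0\<close> in auto)
  from mat_kernel_mult_eq[OF A _ _ this] have "mat_kernel ((c \<cdot>\<^sub>m 1\<^sub>m n) * A) = mat_kernel A"
    by simp
  moreover have "(c \<cdot>\<^sub>m 1\<^sub>m n) * A = c \<cdot>\<^sub>m A" by (rule eq_matI) (use A in auto)
  ultimately show ?thesis unfolding kernel_dim_def using A by simp
qed

lemma mat_kernel_char_matrix_1:
  fixes A :: "'a::field mat"
  assumes A: "A \<in> carrier_mat n n"
  shows "mat_kernel (char_matrix A 1) = {v \<in> carrier_vec n. A *\<^sub>v v = v}"
proof -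
  have "char_matrix A 1 *\<^sub>v v = 0\<^sub>v n \<longleftrightarrow> A *\<^sub>v v = v" if v: "v \<in> carrier_vec n" for v
  proof (cases "v = 0\<^sub>v n")
    case True
    have "M *\<^sub>v 0\<^sub>v n = 0\<^sub>v n" if "M \<in> carrier_mat n n" for M :: "'a mat"
      using that by auto
    from this[OF A] this[OF char_matrix_closed[OF A]] True show ?thesis by simp
  next
    case False
    then show ?thesis
      using eigenvector_char_matrix[OF A, of v 1] v A unfolding eigenvector_def by auto
  qed
  then show ?thesis
    unfolding mat_kernel_def using carrier_matD[OF char_matrix_closed[OF A, of 1]] by auto
qed

lemma rank_idempotent_eq_kernel_dim:
  fixes A :: "'a::field mat"
  assumes A: "A \<in> carrier_mat n n" and idem: "A * A = A"
  shows "vec_space.rank n A = kernel_dim (char_matrix A 1)"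
proof -
  have "vec_space.col_space n A = {y \<in> carrier_vec n. \<exists>x \<in> carrier_vec n. A *\<^sub>v x = y}"
    using vec_space.col_space_eq[OF A] A by simp
  also have "\<dots> = {v \<in> carrier_vec n. A *\<^sub>v v = v}"
  proof (intro equalityI subsetI)
    fix y assume "y \<in> {y \<in> carrier_vec n. \<exists>x \<in> carrier_vec n. A *\<^sub>v x = y}"
    then obtain x where x: "x \<in> carrier_vec n" "A *\<^sub>v x = y" and "y \<in> carrier_vec n" by blast
    have "A *\<^sub>v y = (A * A) *\<^sub>v x" using A x by simp
    with idem x \<open>y \<in> carrier_vec n\<close> show "y \<in> {v \<in> carrier_vec n. A *\<^sub>v v = v}" by simp
  qed blast
  also have "\<dots> = mat_kernel (char_matrix A 1)" using mat_kernel_char_matrix_1[OF A] ..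
  finally show ?thesis
    unfolding vec_space.rank_def kernel_dim_def vec_space.col_space_def
    using carrier_matD[OF char_matrix_closed[OF A]] by simp
qed

text \<open>The image of an idempotent A is the fixed space of A, and (A - I)^n is a multiple of A - I;
  so the rank is the dimension of the generalised eigenspace of 1, which the Jordan form
  identifies with the multiplicity of the root 1 of the characteristic polynomial.\<close>

lemma rank_idempotent:
  fixes A :: "real mat"
  assumes A: "A \<in> carrier_mat n n" and idem: "A * A = A" and "0 < n"
    and cp: "char_poly A = [:-1,1:] ^ a * [:0,1:] ^ (n - a)"
  shows "vec_space.rank n A = a"
proof -
  have "char_poly A = (\<Prod>e \<leftarrow> replicate a 1 @ replicate (n - a) 0. [:-e,1:])"
    unfolding cp by (simp add: prod_list_replicate)
  then obtain n_as where "jordan_nf A n_as" using jordan_nf_exists[OF A] by blast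
  then have "dim_gen_eigenspace A 1 n = a"
    using dim_gen_eigenspace_order[OF A] eig_mult_idempotent(1)[OF cp]
    unfolding eig_mult_def by simp
  moreover obtain k where "n = Suc k" using \<open>0 < n\<close> gr0_implies_Suc by blast
  moreover have "dim_gen_eigenspace A 1 n = kernel_dim ((-1) ^ k \<cdot>\<^sub>m char_matrix A 1)"
    unfolding dim_gen_eigenspace_def \<open>n = Suc k\<close> char_matrix_idempotent_pow[OF A idem] ..
  ultimately have "kernel_dim ((-1) ^ k \<cdot>\<^sub>m char_matrix A 1) = a" by simp
  then show ?thesis
    unfolding rank_idempotent_eq_kernel_dim[OF A idem]
    using kernel_dim_smult[OF char_matrix_closed[OF A], of "(-1) ^ k" 1] by simp
qed

section \<open>The limiting matrix\<close>

lemma mat_trace_Qmat: "mat_trace (Qmat n W k) = real (n - k) * sigma n W k"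
proof -
  have roots: "(\<Sum>i<n. of_bool (root_of F i = i)) = real (n - k)" if "F \<in> forests n W k" for F
  proof -
    have F: "func_forest n F" "card F = k" using that by (simp_all add: forests_iff)
    have "{..<n} \<inter> {i. root_of F i = i} = roots n F"
      using root_of_eq_iff_sink[OF F(1)] unfolding roots_def by auto
    with card_func_forest_roots[OF F(1)] F(2) show ?thesis by simp
  qed
  have "mat_trace (Qmat n W k) = (\<Sum>i<n. \<Sum>F\<in>forests n W k. weight W F * of_bool (root_of F i = i))"
    unfolding mat_trace_def by (simp add: Qmat_index)
  also have "\<dots> = (\<Sum>F\<in>forests n W k. weight W F * (\<Sum>i<n. of_bool (root_of F i = i)))"
    by (subst sum.swap) (simp only: sum_distrib_left)
  also have "\<dots> = (\<Sum>F\<in>forests n W k. weight W F * real (n - k))"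
    using roots by simp
  also have "\<dots> = real (n - k) * sigma n W k"
    unfolding sigma_eq sum_distrib_right[symmetric] by (rule mult.commute)
  finally show ?thesis .
qed

lemma Jmat_carrier: "Jmat n W k \<in> carrier_mat n n"
  unfolding Jmat_def using Qmat_carrier by simp

lemma mat_trace_Jmat_top: "mat_trace (Jmat n W (n - forest_dim n W)) = real (forest_dim n W)"
proof -
  let ?m = "n - forest_dim n W"
  have "mat_trace (Jmat n W ?m) = 1 / sigma n W ?m * mat_trace (Qmat n W ?m)"
    unfolding mat_trace_def Jmat_def by (simp add: sum_distrib_left)
  also have "\<dots> = real (n - ?m)"
    unfolding mat_trace_Qmat using sigma_pos[of ?m n W] by simp
  finally show ?thesis using forest_dim_spec(3)[of n W] by simp
qed

context
  fixes n :: nat and W :: "real mat"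
  assumes diag: "\<forall>i<n. W $$ (i,i) = 0" and nonneg: "\<forall>i<n. \<forall>j<n. W $$ (i,j) \<ge> 0"
begin

interpretation forest_recurrence: matrix_recurrence n "laplacian n W" "Qmat n W" "sigma n W"
proof
  show "Qmat n W 0 = sigma n W 0 \<cdot>\<^sub>m 1\<^sub>m n" by (rule eq_matI) (simp_all add: Qmat_0 sigma_0)
qed (simp_all add: laplacian_carrier Qmat_carrier Qmat_recurrence[OF diag nonneg])

lemma
  shows laplacian_Qmat_top: "laplacian n W * Qmat n W (n - forest_dim n W) = 0\<^sub>m n n"
    and Qmat_top_laplacian: "Qmat n W (n - forest_dim n W) * laplacian n W = 0\<^sub>m n n"
    and Qmat_top_mult: "Qmat n W (n - forest_dim n W) * Qmat n W k
        = sigma n W k \<cdot>\<^sub>m Qmat n W (n - forest_dim n W)"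
    and mult_Qmat_top: "Qmat n W k * Qmat n W (n - forest_dim n W)
        = sigma n W k \<cdot>\<^sub>m Qmat n W (n - forest_dim n W)"
  using forest_recurrence.L_Q_last forest_recurrence.Q_last_L forest_recurrence.Q_last_mult
    forest_recurrence.mult_Q_last
    Qmat_eq_0[of n W "Suc (n - forest_dim n W)"] sigma_eq_0[of n W "Suc (n - forest_dim n W)"]
  by simp_all

lemma
  shows laplacian_Jmat_top: "laplacian n W * Jmat n W (n - forest_dim n W) = 0\<^sub>m n n"
    and Jmat_top_laplacian: "Jmat n W (n - forest_dim n W) * laplacian n W = 0\<^sub>m n n"
  unfolding Jmat_def
  using mult_smult_distrib[of "laplacian n W" n n "Qmat n W (n - forest_dim n W)" n]
    mult_smult_assoc_mat[of "Qmat n W (n - forest_dim n W)" n n "laplacian n W" n]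
    laplacian_Qmat_top Qmat_top_laplacian
  by (simp_all add: laplacian_carrier Qmat_carrier)

lemma
  assumes "k \<le> n - forest_dim n W"
  shows Jmat_top_mult: "Jmat n W (n - forest_dim n W) * Jmat n W k = Jmat n W (n - forest_dim n W)"
    and mult_Jmat_top: "Jmat n W k * Jmat n W (n - forest_dim n W) = Jmat n W (n - forest_dim n W)"
proof -
  let ?m = "n - forest_dim n W"
  have "sigma n W k \<noteq> 0" using sigma_pos[OF assms] by simp
  have smult: "(a \<cdot>\<^sub>m Qmat n W i) * (b \<cdot>\<^sub>m Qmat n W j) = (a * b) \<cdot>\<^sub>m (Qmat n W i * Qmat n W j)"
    for a b i j
    by (rule eq_matI) (auto simp: Qmat_carrier scalar_prod_def sum_distrib_left algebra_simps)
  show "Jmat n W ?m * Jmat n W k = Jmat n W ?m" "Jmat n W k * Jmat n W ?m = Jmat n W ?m"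
    unfolding Jmat_def smult Qmat_top_mult mult_Qmat_top
    using \<open>sigma n W k \<noteq> 0\<close> by (auto intro!: eq_matI)
qed

end

theorem proposition9:
  fixes n :: nat and W :: "real mat"
  assumes "n > 1" and "W \<in> carrier_mat n n"
    and "\<forall>i<n. W $$ (i,i) = 0"
    and "\<forall>i<n. \<forall>j<n. W $$ (i,j) \<ge> 0"
  shows "(laplacian n W * Jmat n W (n - forest_dim n W) = 0\<^sub>m n n
       \<and> Jmat n W (n - forest_dim n W) * laplacian n W = 0\<^sub>m n n
       \<and> laplacian n W * Qmat n W (n - forest_dim n W) = 0\<^sub>m n n
       \<and> Qmat n W (n - forest_dim n W) * laplacian n W = 0\<^sub>m n n)
    \<and> (\<forall>k\<le>n - forest_dim n W.
           Jmat n W (n - forest_dim n W) * Jmat n W k = Jmat n W (n - forest_dim n W)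
         \<and> Jmat n W k * Jmat n W (n - forest_dim n W) = Jmat n W (n - forest_dim n W))
    \<and> (Jmat n W (n - forest_dim n W) * Jmat n W (n - forest_dim n W) = Jmat n W (n - forest_dim n W))
    \<and> (vec_space.rank n (Jmat n W (n - forest_dim n W)) = forest_dim n W
       \<and> eig_mult 1 (Jmat n W (n - forest_dim n W)) = forest_dim n W
       \<and> mat_trace (Jmat n W (n - forest_dim n W)) = real (forest_dim n W)
       \<and> eig_mult 0 (Jmat n W (n - forest_dim n W)) = n - forest_dim n W)"
proof -
  let ?J = "Jmat n W (n - forest_dim n W)"
  note W = assms(3,4)
  have idem: "?J * ?J = ?J" using Jmat_top_mult[OF W order.refl] .
  obtain a where cp: "char_poly ?J = [:-1,1:] ^ a * [:0,1:] ^ (n - a)" and "mat_trace ?J = real a"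
    using char_poly_idempotent[OF Jmat_carrier idem] .
  with mat_trace_Jmat_top have "a = forest_dim n W" by simp
  with cp have "char_poly ?J = [:-1,1:] ^ forest_dim n W * [:0,1:] ^ (n - forest_dim n W)" by simp
  note spectrum = eig_mult_idempotent[OF this] rank_idempotent[OF Jmat_carrier idem _ this]
  show ?thesis
    using laplacian_Jmat_top[OF W] Jmat_top_laplacian[OF W] laplacian_Qmat_top[OF W]
      Qmat_top_laplacian[OF W] Jmat_top_mult[OF W] mult_Jmat_top[OF W] idem spectrum
      mat_trace_Jmat_top \<open>n > 1\<close>
    by simp
qed

end
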